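(* Fix integers $s,t\geq 2$ and a subset $W=\{w_1,w_2,\ldots,w_k\}$ of $\{s+1,s+2,\ldots,st\}$ with $w_1<w_2<\cdots<w_k$. Let $I=\{i_1,\ldots,i_k\}$ with $i_1<\cdots<i_k$ be a set of integers satisfying $w_\ell-s+\ell\leq i_\ell\leq w_\ell-1$ for all $\ell\in[k]$. Define the permutation $\mu=\mu_W(I)=\mu_1\mu_2\cdots\mu_{st}$ of $[st]$ by setting $\mu_{i_\ell}=w_\ell$ for each $\ell\in[k]$ and placing the elements of $[st]\setminus W$ in increasing order in the remaining positions. Then $\mu_W(I)$ is a $321$-avoiding linear extension of $K_{s,t}^\alpha$ whose right-to-left minima are precisely the elements of $[st]\setminus W$.
   Context: $K^\alpha_{s,t}$ is the poset on $[st]$ obtained from the comb $K_{s,t}$ (elements $e_{i,j}$, $1\le i\le s$, $1\le j\le t$, covers $e_{i,1}\lessdot e_{i+1,1}$ and $e_{i,j}\lessdot e_{i,j+1}$) by labeling $e_{i,j}$ with $(j-1)s+i$; equivalently its order is generated by $i\lessdot i+1$ for $1\le i\le s-1$ and $i\lessdot i+s$ for $1\le i\le st-s$. A linear extension is a permutation of $[st]$ in which $x$ precedes $y$ whenever $x<y$ in the poset. An entry $\pi_i$ of a permutation is a right-to-left minimum if $\pi_i<\pi_j$ for all $j>i$. *)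

theory Defs
  imports Main
begin

text \<open>Cover relations of the labelled comb poset K^alpha_{s,t} on [st]:
  i covered by i+1 for 1 <= i <= s-1, and i covered by i+s for 1 <= i <= st-s.\<close>
definition comb_cover :: "nat \<Rightarrow> nat \<Rightarrow> nat \<Rightarrow> nat \<Rightarrow> bool" where
  "comb_cover s t x y \<longleftrightarrow>
     (1 \<le> x \<and> x \<le> s - 1 \<and> y = x + 1) \<or> (1 \<le> x \<and> x + s \<le> s * t \<and> y = x + s)"

definition comb_le :: "nat \<Rightarrow> nat \<Rightarrow> nat \<Rightarrow> nat \<Rightarrow> bool" where
  "comb_le s t = (comb_cover s t)\<^sup>*\<^sup>*"

text \<open>Permutations of [n] are lists; entry pi_i (1-indexed) is pi ! (i-1).\<close>
definition is_perm :: "nat \<Rightarrow> nat list \<Rightarrow> bool" where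
  "is_perm n \<pi> \<longleftrightarrow> distinct \<pi> \<and> set \<pi> = {1..n}"

definition is_linext :: "nat \<Rightarrow> nat \<Rightarrow> nat list \<Rightarrow> bool" where
  "is_linext s t \<pi> \<longleftrightarrow> is_perm (s * t) \<pi> \<and>
     (\<forall>i j. i < length \<pi> \<and> j < length \<pi> \<and> comb_le s t (\<pi> ! i) (\<pi> ! j) \<longrightarrow> i \<le> j)"

definition avoids_321 :: "nat list \<Rightarrow> bool" where
  "avoids_321 \<pi> \<longleftrightarrow>
     \<not> (\<exists>i j k. i < j \<and> j < k \<and> k < length \<pi> \<and> \<pi> ! i > \<pi> ! j \<and> \<pi> ! j > \<pi> ! k)"

definition rl_minima :: "nat list \<Rightarrow> nat set" where
  "rl_minima \<pi> = {\<pi> ! i | i. i < length \<pi> \<and> (\<forall>j. i < j \<and> j < length \<pi> \<longrightarrow> \<pi> ! i < \<pi> ! j)}"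

definition mu_W :: "nat \<Rightarrow> nat set \<Rightarrow> nat set \<Rightarrow> nat list" where
  "mu_W n W I = map (\<lambda>p. if p \<in> I then sorted_list_of_set W ! card {q \<in> I. q < p}
                         else sorted_list_of_set ({1..n} - W) ! card ({1..<p} - I)) [1..<n+1]"

end

theory Submission
  imports Defs
begin

text \<open>The permutation \<open>\<mu>\<^sub>W(I)\<close> interleaves two increasing sequences, \<open>W\<close> at the
  positions \<open>I\<close> and \<open>V = [st] - W\<close> at the remaining positions \<open>J\<close>, so it avoids 321.
  Everything else is counting: the entry at a position \<open>p \<in> J\<close> is the element of \<open>V\<close>
  of rank \<open>|J \<inter> [1, p)|\<close>, and \<open>|J \<inter> [1, i\<^sub>l)| = i\<^sub>l - l\<close> while
  \<open>|V \<inter> [1, w\<^sub>l)| = w\<^sub>l - l\<close>. Hence \<open>i\<^sub>l \<le> w\<^sub>l - 1\<close> makes every \<open>V\<close>-entry before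
  position \<open>i\<^sub>l\<close> smaller than \<open>w\<^sub>l\<close>: the \<open>V\<close>-entries are right-to-left minima and
  \<open>w\<^sub>l + s\<close> comes after \<open>w\<^sub>l\<close>, while \<open>w\<^sub>l\<close> is not a right-to-left minimum because
  fewer than \<open>w\<^sub>l - 1\<close> positions precede it. Dually \<open>w\<^sub>l - s + l \<le> i\<^sub>l\<close> puts
  \<open>w\<^sub>l - s\<close> before \<open>w\<^sub>l\<close>. The remaining covers \<open>x \<prec> x + 1\<close>, \<open>x < s\<close>, join
  values below \<open>s + 1\<close>, which all lie in \<open>V\<close>.\<close>

definition rank :: "'a::linorder set \<Rightarrow> 'a \<Rightarrow> nat" where
  "rank S x = card {y \<in> S. y < x}"

lemma sorted_list_of_set_nth_less_iff:
  assumes "finite S" "i < card S" "j < card S"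
  shows "sorted_list_of_set S ! i < sorted_list_of_set S ! j \<longleftrightarrow> i < j"
  using assms sorted_wrt_less_idx[OF strict_sorted_list_of_set]
    sorted_wrt_nth_less[OF strict_sorted_list_of_set]
  by (metis length_sorted_list_of_set linorder_neqE_nat order.asym)

lemma sorted_list_of_set_nth_mem:
  assumes "finite S" "i < card S"
  shows "sorted_list_of_set S ! i \<in> S"
  using assms by (metis nth_mem length_sorted_list_of_set set_sorted_list_of_set)

lemma rank_sorted_list_of_set_nth:
  assumes "finite S" "r < card S"
  shows "rank S (sorted_list_of_set S ! r) = r"
proof -
  let ?xs = "sorted_list_of_set S"
  have "{y \<in> S. y < ?xs ! r} = (!) ?xs ` {..<r}"
  proof (intro equalityI subsetI)
    fix y assume y: "y \<in> {y \<in> S. y < ?xs ! r}"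
    then obtain i where "i < card S" "y = ?xs ! i"
      using assms(1) by (metis in_set_conv_nth length_sorted_list_of_set mem_Collect_eq
          set_sorted_list_of_set)
    then show "y \<in> (!) ?xs ` {..<r}"
      using y sorted_list_of_set_nth_less_iff[OF assms(1) _ assms(2)] by auto
  next
    fix y assume "y \<in> (!) ?xs ` {..<r}"
    then show "y \<in> {y \<in> S. y < ?xs ! r}"
      using assms by (auto intro!: sorted_list_of_set_nth_mem simp: sorted_list_of_set_nth_less_iff)
  qed
  moreover have "inj_on ((!) ?xs) {..<r}"
    using assms by (intro inj_on_nth) auto
  ultimately show ?thesis
    unfolding rank_def by (simp add: card_image)
qed

lemma rank_less_card:
  assumes "finite S" "x \<in> S"
  shows "rank S x < card S"
  unfolding rank_def using assms by (intro psubset_card_mono) auto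

lemma sorted_list_of_set_nth_rank:
  assumes "finite S" "x \<in> S"
  shows "sorted_list_of_set S ! rank S x = x"
proof -
  obtain i where "i < card S" "x = sorted_list_of_set S ! i"
    using assms by (metis in_set_conv_nth length_sorted_list_of_set set_sorted_list_of_set)
  then show ?thesis using rank_sorted_list_of_set_nth[OF assms(1)] by simp
qed

lemma rank_strict_mono:
  assumes "finite S" "x \<in> S" "x < y"
  shows "rank S x < rank S y"
  unfolding rank_def using assms by (intro psubset_card_mono) auto

lemma rank_mono:
  assumes "finite S" "x \<le> y"
  shows "rank S x \<le> rank S y"
  unfolding rank_def using assms by (intro card_mono) auto

lemma sorted_list_of_set_nth_less_if_less_rank:
  assumes "finite S" "r < rank S x"
  shows "sorted_list_of_set S ! r < x"
proof (rule ccontr)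
  assume not_less: "\<not> ?thesis"
  have "rank S x \<le> card S"
    unfolding rank_def using assms(1) by (intro card_mono) auto
  then have "r < card S"
    using assms(2) by linarith
  have "rank S x \<le> rank S (sorted_list_of_set S ! r)"
    using not_less by (intro rank_mono[OF assms(1)]) simp
  also have "\<dots> = r"
    using rank_sorted_list_of_set_nth[OF assms(1) \<open>r < card S\<close>] .
  finally show False
    using assms(2) by simp
qed

lemma rank_Diff_atLeastAtMost:
  fixes X :: "nat set"
  assumes "X \<subseteq> {1..n}" "x \<le> n"
  shows "rank ({1..n} - X) x = x - 1 - rank X x"
proof -
  have "{y \<in> {1..n} - X. y < x} = {1..<x} - {y \<in> X. y < x}"
    using assms by auto
  moreover have "{y \<in> X. y < x} \<subseteq> {1..<x}"
    using assms(1) by auto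
  ultimately show ?thesis
    unfolding rank_def by (simp add: card_Diff_subset finite_subset)
qed

lemma avoids_321_if_two_increasing_classes:
  assumes "\<And>i j. i < j \<Longrightarrow> j < length xs \<Longrightarrow> P i \<longleftrightarrow> P j \<Longrightarrow> xs ! i < xs ! j"
  shows "avoids_321 xs"
  unfolding avoids_321_def
proof clarify
  fix i j k
  assume "i < j" "j < k" "k < length xs" "xs ! j < xs ! i" "xs ! k < xs ! j"
  moreover have "(P i \<longleftrightarrow> P j) \<or> (P j \<longleftrightarrow> P k) \<or> (P i \<longleftrightarrow> P k)"
    by blast
  ultimately show False
    using assms by (metis less_trans not_less_iff_gr_or_eq)
qed

lemma index_le_if_rtranclp:
  assumes "distinct xs"
    and closed: "\<And>a b. r a b \<Longrightarrow> a \<in> set xs \<Longrightarrow> b \<in> set xs"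
    and forward: "\<And>i j. i < length xs \<Longrightarrow> j < length xs \<Longrightarrow> r (xs ! i) (xs ! j) \<Longrightarrow> i < j"
    and "r\<^sup>*\<^sup>* (xs ! i) (xs ! j)" "i < length xs" "j < length xs"
  shows "i \<le> j"
proof -
  have "b \<in> set xs \<and> (\<forall>j < length xs. xs ! j = b \<longrightarrow> i \<le> j)" if "r\<^sup>*\<^sup>* (xs ! i) b" for b
    using that
  proof (induction rule: rtranclp_induct)
    case base
    then show ?case
      using assms(1,5) by (auto simp: nth_eq_iff_index_eq)
  next
    case (step b c)
    then obtain m where m: "m < length xs" "xs ! m = b"
      by (auto simp: in_set_conv_nth)
    then have "i \<le> m"
      using step.IH by blast
    moreover have "m < j" if "j < length xs" "xs ! j = c" for j
      using forward[OF m(1) that(1)] step.hyps(2) m(2) that(2) by simp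
    ultimately show ?case
      using closed[OF step.hyps(2)] step.IH by fastforce
  qed
  then show ?thesis
    using assms(4,6) by blast
qed

lemma rl_minima_map_upt:
  "rl_minima (map f [1..<n+1]) = f ` {p \<in> {1..n}. \<forall>q \<in> {1..n}. p < q \<longrightarrow> f p < f q}"
proof (intro equalityI subsetI)
  fix x assume "x \<in> rl_minima (map f [1..<n+1])"
  then obtain i where i: "i < n" "x = f (Suc i)"
    and later: "\<forall>j. i < j \<and> j < n \<longrightarrow> f (Suc i) < f (Suc j)"
    unfolding rl_minima_def by (auto simp del: upt_Suc)
  have "f (Suc i) < f q" if "q \<in> {1..n}" "Suc i < q" for q
    using later[rule_format, of "q - 1"] that by (simp add: less_diff_conv)
  then show "x \<in> f ` {p \<in> {1..n}. \<forall>q \<in> {1..n}. p < q \<longrightarrow> f p < f q}"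
    using i by force
next
  fix x assume "x \<in> f ` {p \<in> {1..n}. \<forall>q \<in> {1..n}. p < q \<longrightarrow> f p < f q}"
  then obtain p where p: "p \<in> {1..n}" "x = f p" "\<forall>q \<in> {1..n}. p < q \<longrightarrow> f p < f q"
    by blast
  then show "x \<in> rl_minima (map f [1..<n+1])"
    unfolding rl_minima_def by (intro CollectI exI[of _ "p - 1"]) (auto simp del: upt_Suc)
qed

locale interleaving =
  fixes n :: nat and W I :: "nat set"
  assumes W_subset: "W \<subseteq> {1..n}" and I_subset: "I \<subseteq> {1..n}" and card_I: "card I = card W"
begin

definition V :: "nat set" where
  "V = {1..n} - W"

definition J :: "nat set" where
  "J = {1..n} - I"

definition entry :: "nat \<Rightarrow> nat" where
  "entry p = (if p \<in> I then sorted_list_of_set W ! rank I p else sorted_list_of_set V ! rank J p)"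

lemma finite_W [simp]: "finite W"
  using W_subset finite_subset by blast

lemma finite_I [simp]: "finite I"
  using I_subset finite_subset by blast

lemma finite_V [simp]: "finite V" and finite_J [simp]: "finite J"
  unfolding V_def J_def by simp_all

lemma card_J_eq_card_V: "card J = card V"
  unfolding V_def J_def using W_subset I_subset card_I by (simp add: card_Diff_subset)

lemma mu_W_eq: "mu_W n W I = map entry [1..<n+1]"
proof -
  have "card ({1..<p} - I) = rank J p" if "p \<le> n" for p
    unfolding rank_def J_def using that by (intro arg_cong[where f = card]) auto
  then show ?thesis
    unfolding mu_W_def entry_def V_def rank_def by (intro map_cong) auto
qed

lemma length_mu_W: "length (mu_W n W I) = n"
  by (simp add: mu_W_eq)

lemma nth_mu_W: "i < n \<Longrightarrow> mu_W n W I ! i = entry (Suc i)"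
  by (simp add: mu_W_eq del: upt_Suc)

lemma rank_I_less_card_W: "p \<in> I \<Longrightarrow> rank I p < card W"
  using rank_less_card[OF finite_I] card_I by metis

lemma rank_J_less_card_V: "p \<in> J \<Longrightarrow> rank J p < card V"
  using rank_less_card[OF finite_J] card_J_eq_card_V by metis

lemma entry_I: "p \<in> I \<Longrightarrow> entry p = sorted_list_of_set W ! rank I p"
  unfolding entry_def by simp

lemma entry_J: "p \<in> J \<Longrightarrow> entry p = sorted_list_of_set V ! rank J p"
  unfolding entry_def J_def by simp

lemma entry_in_W: "p \<in> I \<Longrightarrow> entry p \<in> W"
  using entry_I rank_I_less_card_W sorted_list_of_set_nth_mem[OF finite_W] by metis

lemma entry_in_V: "p \<in> J \<Longrightarrow> entry p \<in> V"
  using entry_J rank_J_less_card_V sorted_list_of_set_nth_mem[OF finite_V] by metis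

lemma rank_entry_J: "p \<in> J \<Longrightarrow> rank V (entry p) = rank J p"
  using entry_J rank_J_less_card_V rank_sorted_list_of_set_nth[OF finite_V] by metis

lemma I_sorted_list_of_set_indexE:
  assumes "p \<in> I"
  obtains l where "l < card W" "p = sorted_list_of_set I ! l" "entry p = sorted_list_of_set W ! l"
  using rank_I_less_card_W[OF assms] sorted_list_of_set_nth_rank[OF finite_I assms]
    entry_I[OF assms] by metis

lemma entry_strict_mono_on_I:
  assumes "p \<in> I" "q \<in> I" "p < q"
  shows "entry p < entry q"
proof -
  have "rank I p < rank I q"
    using rank_strict_mono[OF finite_I] assms by blast
  then show ?thesis
    using assms entry_I rank_I_less_card_W sorted_list_of_set_nth_less_iff[OF finite_W] by metis
qed

lemma entry_strict_mono_on_J: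
  assumes "p \<in> J" "q \<in> J" "p < q"
  shows "entry p < entry q"
proof -
  have "rank J p < rank J q"
    using rank_strict_mono[OF finite_J] assms by blast
  then show ?thesis
    using assms entry_J rank_J_less_card_V sorted_list_of_set_nth_less_iff[OF finite_V] by metis
qed

lemma less_if_entry_less_on_I: "p \<in> I \<Longrightarrow> q \<in> I \<Longrightarrow> entry p < entry q \<Longrightarrow> p < q"
  using entry_strict_mono_on_I by (metis less_asym linorder_neqE_nat)

lemma less_if_entry_less_on_J: "p \<in> J \<Longrightarrow> q \<in> J \<Longrightarrow> entry p < entry q \<Longrightarrow> p < q"
  using entry_strict_mono_on_J by (metis less_asym linorder_neqE_nat)

lemma entry_bij: "bij_betw entry {1..n} {1..n}"
proof -
  have I_J: "p \<in> I \<or> p \<in> J" if "p \<in> {1..n}" for p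
    using that J_def by blast
  have maps_to: "entry p \<in> {1..n}" if "p \<in> {1..n}" for p
    using I_J[OF that] entry_in_W entry_in_V W_subset V_def by blast
  have "inj_on entry {1..n}"
  proof (rule linorder_inj_onI')
    fix p q assume "p \<in> {1..n}" "q \<in> {1..n}" "p < q"
    then consider "p \<in> I" "q \<in> I" | "p \<in> J" "q \<in> J" | "entry p \<in> W \<longleftrightarrow> entry q \<notin> W"
      using I_J entry_in_W entry_in_V unfolding V_def by blast
    then show "entry p \<noteq> entry q"
      by cases (use \<open>p < q\<close> entry_strict_mono_on_I entry_strict_mono_on_J in force)+
  qed
  moreover have "entry ` {1..n} \<subseteq> {1..n}"
    using maps_to by blast
  ultimately show ?thesis
    unfolding bij_betw_def by (simp add: endo_inj_surj)
qed

lemma entry_image_J: "entry ` J = V"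
proof -
  have "J \<union> I = {1..n}"
    using I_subset unfolding J_def by blast
  then have "entry ` J \<union> entry ` I = {1..n}"
    using bij_betw_imp_surj_on[OF entry_bij] by (simp flip: image_Un)
  moreover have "entry ` J \<subseteq> V" "entry ` I \<subseteq> W"
    using entry_in_V entry_in_W by auto
  ultimately show ?thesis
    unfolding V_def by blast
qed

lemma is_perm_mu_W: "is_perm n (mu_W n W I)"
  using entry_bij unfolding is_perm_def mu_W_eq bij_betw_def
  by (simp add: distinct_map atLeastLessThanSuc_atLeastAtMost del: upt_Suc)

lemma avoids_321_mu_W: "avoids_321 (mu_W n W I)"
proof (rule avoids_321_if_two_increasing_classes[where P = "\<lambda>i. Suc i \<in> I"])
  fix i j assume "i < j" "j < length (mu_W n W I)" "Suc i \<in> I \<longleftrightarrow> Suc j \<in> I"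
  then show "mu_W n W I ! i < mu_W n W I ! j"
    using entry_strict_mono_on_I entry_strict_mono_on_J
    by (auto simp: length_mu_W nth_mu_W J_def)
qed

lemma I_sorted_list_of_set_nth:
  "l < card W \<Longrightarrow> sorted_list_of_set I ! l \<in> I \<and> rank I (sorted_list_of_set I ! l) = l"
  using card_I sorted_list_of_set_nth_mem[OF finite_I] rank_sorted_list_of_set_nth[OF finite_I]
  by simp

lemma rank_J_sorted_list_of_set_I_nth:
  assumes "l < card W"
  shows "rank J (sorted_list_of_set I ! l) = sorted_list_of_set I ! l - 1 - l"
  using I_sorted_list_of_set_nth[OF assms] I_subset
  unfolding J_def by (subst rank_Diff_atLeastAtMost) auto

lemma rank_V_sorted_list_of_set_W_nth:
  assumes "l < card W"
  shows "rank V (sorted_list_of_set W ! l) = sorted_list_of_set W ! l - 1 - l"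
  using sorted_list_of_set_nth_mem[OF finite_W assms] rank_sorted_list_of_set_nth[OF finite_W assms]
    W_subset
  unfolding V_def by (subst rank_Diff_atLeastAtMost) auto

lemma entry_less_if_before_sorted_list_of_set_I_nth:
  assumes "p \<in> J" "l < card W" "p < sorted_list_of_set I ! l"
    and "sorted_list_of_set I ! l \<le> sorted_list_of_set W ! l"
  shows "entry p < sorted_list_of_set W ! l"
proof -
  have "rank J p < rank J (sorted_list_of_set I ! l)"
    using rank_strict_mono[OF finite_J assms(1,3)] .
  also have "\<dots> \<le> rank V (sorted_list_of_set W ! l)"
    using assms(2,4) rank_J_sorted_list_of_set_I_nth rank_V_sorted_list_of_set_W_nth by simp
  finally show ?thesis
    using entry_J[OF assms(1)] sorted_list_of_set_nth_less_if_less_rank[OF finite_V] by simp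
qed

lemma before_sorted_list_of_set_I_nth_if_entry_small:
  assumes "p \<in> J" "l < card W" "entry p + d \<le> sorted_list_of_set W ! l"
    and "sorted_list_of_set W ! l + l + 1 \<le> sorted_list_of_set I ! l + d"
  shows "p < sorted_list_of_set I ! l"
proof (rule ccontr)
  assume "\<not> ?thesis"
  moreover have "p \<noteq> sorted_list_of_set I ! l"
    using assms(1,2) I_sorted_list_of_set_nth unfolding J_def by auto
  ultimately have "rank J (sorted_list_of_set I ! l) \<le> rank J p"
    by (intro rank_mono) auto
  also have "\<dots> = rank V (entry p)"
    using rank_entry_J[OF assms(1)] by simp
  also have "\<dots> = entry p - 1 - rank W (entry p)"
    using entry_in_V[OF assms(1)] W_subset unfolding V_def by (subst rank_Diff_atLeastAtMost) auto
  finally have "sorted_list_of_set I ! l - 1 - l \<le> entry p - 1"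
    using rank_J_sorted_list_of_set_I_nth[OF assms(2)] by simp
  moreover have "1 \<le> entry p"
    using entry_in_V[OF assms(1)] unfolding V_def by simp
  ultimately show False
    using assms(3,4) by linarith
qed

lemma entry_less_later_if_J:
  assumes upper: "\<And>l. l < card W \<Longrightarrow> sorted_list_of_set I ! l \<le> sorted_list_of_set W ! l"
    and "p \<in> J" "q \<in> {1..n}" "p < q"
  shows "entry p < entry q"
proof (cases "q \<in> I")
  case True
  then obtain l
    where "l < card W" "q = sorted_list_of_set I ! l" "entry q = sorted_list_of_set W ! l"
    by (rule I_sorted_list_of_set_indexE)
  then show ?thesis
    using entry_less_if_before_sorted_list_of_set_I_nth[OF assms(2)] upper assms(4) by metis
next
  case False
  then show ?thesis
    using assms(2-4) entry_strict_mono_on_J unfolding J_def by blast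
qed

lemma exists_later_smaller_entry_if_I:
  assumes upper: "\<And>l. l < card W \<Longrightarrow> sorted_list_of_set I ! l < sorted_list_of_set W ! l"
    and "p \<in> I"
  shows "\<exists>q \<in> {1..n}. p < q \<and> entry q < entry p"
proof (rule ccontr)
  \<comment> \<open>the \<open>entry p - 1\<close> smaller values do not fit into the \<open>p - 1\<close> earlier positions\<close>
  assume no_later_smaller: "\<not> ?thesis"
  define A where "A = {q \<in> {1..n}. entry q < entry p}"
  have "A \<subseteq> {1..<p}"
  proof
    fix q assume "q \<in> A"
    then have "q \<in> {1..n}" "q \<noteq> p" "\<not> p < q"
      using no_later_smaller unfolding A_def by auto
    then show "q \<in> {1..<p}"
      by simp
  qed
  then have "card A \<le> p - 1"
    using card_mono[of "{1..<p}" A] by simp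
  have "entry ` A = {1..<entry p}"
  proof (intro equalityI subsetI)
    fix x assume "x \<in> entry ` A"
    then show "x \<in> {1..<entry p}"
      using bij_betw_imp_surj_on[OF entry_bij] unfolding A_def by fastforce
  next
    fix x assume x: "x \<in> {1..<entry p}"
    then have "x \<in> entry ` {1..n}"
      using bij_betw_imp_surj_on[OF entry_bij] entry_in_W[OF assms(2)] W_subset by fastforce
    then show "x \<in> entry ` A"
      using x unfolding A_def by auto
  qed
  moreover have "inj_on entry A"
    by (rule inj_on_subset[OF bij_betw_imp_inj_on[OF entry_bij]]) (auto simp: A_def)
  ultimately have "card A = entry p - 1"
    using card_image[of entry A] by simp
  moreover obtain l where "l < card W" "p = sorted_list_of_set I ! l"
    "entry p = sorted_list_of_set W ! l"
    using assms(2) by (rule I_sorted_list_of_set_indexE)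
  then have "p < entry p"
    using upper by simp
  moreover have "1 \<le> p"
    using assms(2) I_subset by auto
  ultimately show False
    using \<open>card A \<le> p - 1\<close> by linarith
qed

lemma rl_minimum_positions_eq_J:
  assumes upper: "\<And>l. l < card W \<Longrightarrow> sorted_list_of_set I ! l < sorted_list_of_set W ! l"
  shows "{p \<in> {1..n}. \<forall>q \<in> {1..n}. p < q \<longrightarrow> entry p < entry q} = J"
proof -
  have "sorted_list_of_set I ! l \<le> sorted_list_of_set W ! l" if "l < card W" for l
    using upper[OF that] by simp
  then have "\<forall>q \<in> {1..n}. p < q \<longrightarrow> entry p < entry q" if "p \<in> J" for p
    using entry_less_later_if_J that by blast
  moreover have "\<not> (\<forall>q \<in> {1..n}. p < q \<longrightarrow> entry p < entry q)" if "p \<in> I" for p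
    using exists_later_smaller_entry_if_I[OF upper that] by auto
  ultimately show ?thesis
    using I_subset unfolding J_def by blast
qed

lemma rl_minima_mu_W:
  assumes "\<And>l. l < card W \<Longrightarrow> sorted_list_of_set I ! l < sorted_list_of_set W ! l"
  shows "rl_minima (mu_W n W I) = V"
  using rl_minima_map_upt[of entry n] rl_minimum_positions_eq_J[OF assms] entry_image_J
  by (simp add: mu_W_eq)

end

text \<open>With 0-based \<open>l\<close>, \<open>lower_bound\<close> and \<open>upper_bound\<close> are the hypotheses
  \<open>w\<^sub>l - s + (l + 1) \<le> i\<^sub>l \<le> w\<^sub>l - 1\<close>, rearranged to avoid truncated subtraction.\<close>

locale comb_interleaving = interleaving "s * t" W I for s t :: nat and W I +
  assumes s_pos: "0 < s" and t_pos: "0 < t"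
    and W_above: "\<And>w. w \<in> W \<Longrightarrow> s < w"
    and lower_bound: "\<And>l. l < card W \<Longrightarrow>
      sorted_list_of_set W ! l + l + 1 \<le> sorted_list_of_set I ! l + s"
    and upper_bound: "\<And>l. l < card W \<Longrightarrow> sorted_list_of_set I ! l < sorted_list_of_set W ! l"
begin

lemma less_if_comb_cover:
  assumes p: "p \<in> {1..s * t}" and q: "q \<in> {1..s * t}"
    and cover: "comb_cover s t (entry p) (entry q)"
  shows "p < q"
proof -
  have entry_less: "entry p < entry q"
    using cover s_pos unfolding comb_cover_def by auto
  have I_or_J: "x \<in> I \<or> x \<in> J" if "x \<in> {1..s * t}" for x
    using that unfolding J_def by blast
  from cover consider "entry q \<le> s" | "entry q = entry p + s"
    unfolding comb_cover_def by linarith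
  then show ?thesis
  proof cases
    case 1
    then have "p \<in> J" "q \<in> J"
      using entry_less I_or_J[OF p] I_or_J[OF q] entry_in_W W_above by fastforce+
    then show ?thesis
      using less_if_entry_less_on_J entry_less by blast
  next
    case 2
    consider "p \<in> I" "q \<in> I" | "p \<in> J" "q \<in> J" | "p \<in> I" "q \<in> J" | "p \<in> J" "q \<in> I"
      using I_or_J[OF p] I_or_J[OF q] by blast
    then show ?thesis
    proof cases
      case 3
      obtain l
        where l: "l < card W" "p = sorted_list_of_set I ! l" "entry p = sorted_list_of_set W ! l"
        using 3(1) by (rule I_sorted_list_of_set_indexE)
      have "\<not> q < p"
        using entry_less_if_before_sorted_list_of_set_I_nth[OF 3(2) l(1)] l upper_bound[OF l(1)]
          entry_less by fastforce
      moreover have "q \<noteq> p"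
        using 3 unfolding J_def by blast
      ultimately show ?thesis
        by simp
    next
      case 4
      obtain l
        where l: "l < card W" "q = sorted_list_of_set I ! l" "entry q = sorted_list_of_set W ! l"
        using 4(2) by (rule I_sorted_list_of_set_indexE)
      show ?thesis
        using before_sorted_list_of_set_I_nth_if_entry_small[OF 4(1) l(1), of s]
          lower_bound[OF l(1)] l 2 by simp
    qed (use less_if_entry_less_on_I less_if_entry_less_on_J entry_less in blast)+
  qed
qed

lemma is_linext_mu_W: "is_linext s t (mu_W (s * t) W I)"
proof -
  let ?\<mu> = "mu_W (s * t) W I"
  have perm: "is_perm (s * t) ?\<mu>"
    by (rule is_perm_mu_W)
  have "s \<le> s * t"
    using t_pos by simp
  have closed: "b \<in> set ?\<mu>" if "comb_cover s t a b" "a \<in> set ?\<mu>" for a b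
  proof -
    have "1 \<le> b \<and> b \<le> s * t"
      using that(1) \<open>s \<le> s * t\<close> unfolding comb_cover_def by (elim disjE conjE; linarith)
    then show ?thesis
      using perm unfolding is_perm_def by simp
  qed
  have forward: "i < j"
    if "i < length ?\<mu>" "j < length ?\<mu>" "comb_cover s t (?\<mu> ! i) (?\<mu> ! j)" for i j
  proof -
    have "Suc i \<in> {1..s * t}" "Suc j \<in> {1..s * t}"
      using that(1,2) length_mu_W by auto
    moreover have "comb_cover s t (entry (Suc i)) (entry (Suc j))"
      using that by (simp add: length_mu_W nth_mu_W)
    ultimately have "Suc i < Suc j"
      by (rule less_if_comb_cover)
    then show ?thesis
      by simp
  qed
  have "distinct ?\<mu>"
    using perm by (simp add: is_perm_def)
  show ?thesis
    unfolding is_linext_def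
  proof (intro conjI perm allI impI)
    fix i j assume h: "i < length ?\<mu> \<and> j < length ?\<mu> \<and> comb_le s t (?\<mu> ! i) (?\<mu> ! j)"
    then have "(comb_cover s t)\<^sup>*\<^sup>* (?\<mu> ! i) (?\<mu> ! j)"
      by (simp add: comb_le_def)
    with h show "i \<le> j"
      using index_le_if_rtranclp[OF \<open>distinct ?\<mu>\<close> closed forward, where i = i and j = j] by simp
  qed
qed

end


lemma comb_interleavingI:
  fixes s t :: nat and W I :: "nat set"
  assumes "0 < s" "0 < t" "W \<subseteq> {s<..s * t}" "finite I" "card I = card W"
    and bounds: "\<And>l. l < card W \<Longrightarrow>
      sorted_list_of_set W ! l - s + Suc l \<le> sorted_list_of_set I ! l \<and>
      sorted_list_of_set I ! l \<le> sorted_list_of_set W ! l - 1"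
  shows "comb_interleaving s t W I"
proof -
  let ?w = "\<lambda>l. sorted_list_of_set W ! l" and ?i = "\<lambda>l. sorted_list_of_set I ! l"
  have shifted_bounds: "?w l + l + 1 \<le> ?i l + s \<and> ?i l < ?w l \<and> ?i l \<in> {1..s * t}"
    if "l < card W" for l
  proof -
    have "finite W"
      by (rule finite_subset[OF assms(3)]) simp
    then have "?w l \<in> W"
      using that by (rule sorted_list_of_set_nth_mem)
    then have "s < ?w l" "?w l \<le> s * t"
      using assms(3) by auto
    with bounds[OF that] show ?thesis
      by auto
  qed
  have "I \<subseteq> {1..s * t}"
  proof
    fix x assume x: "x \<in> I"
    have "rank I x < card W"
      using rank_less_card[OF assms(4) x] assms(5) by simp
    then have "?i (rank I x) \<in> {1..s * t}"
      using shifted_bounds by simp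
    then show "x \<in> {1..s * t}"
      by (simp add: sorted_list_of_set_nth_rank[OF assms(4) x])
  qed
  then show ?thesis
    using assms(1-3,5) shifted_bounds by unfold_locales auto
qed

theorem lemma2:
  fixes s t :: nat and W I :: "nat set"
  assumes "s \<ge> 2" and "t \<ge> 2"
    and "W \<subseteq> {s+1..s*t}"
    and "finite I" and "card I = card W"
    and "\<forall>l \<in> {1..card W}.
           sorted_list_of_set W ! (l - 1) - s + l \<le> sorted_list_of_set I ! (l - 1) \<and>
           sorted_list_of_set I ! (l - 1) \<le> sorted_list_of_set W ! (l - 1) - 1"
  shows "is_linext s t (mu_W (s*t) W I) \<and> avoids_321 (mu_W (s*t) W I) \<and>
         rl_minima (mu_W (s*t) W I) = {1..s*t} - W"
proof -
  have bounds: "sorted_list_of_set W ! l - s + Suc l \<le> sorted_list_of_set I ! l \<and>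
      sorted_list_of_set I ! l \<le> sorted_list_of_set W ! l - 1" if "l < card W" for l
  proof -
    have "Suc l \<in> {1..card W}"
      using that by simp
    then show ?thesis
      using bspec[OF assms(6)] by fastforce
  qed
  have "0 < s" "0 < t" "W \<subseteq> {s<..s * t}"
    using assms(1-3) by auto
  then interpret comb_interleaving s t W I
    using comb_interleavingI assms(4,5) bounds by blast
  have "rl_minima (mu_W (s * t) W I) = V"
    by (rule rl_minima_mu_W[OF upper_bound])
  then show ?thesis
    using is_linext_mu_W avoids_321_mu_W unfolding V_def by simp
qed

end
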